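(* Let $a\geq3$ be an odd integer and let $\alpha\in A_a\cup B_a$. (1) If $\alpha\in A_{a-2}$, then the sequence of compatible orbits $\{\mathscr{O}_n((0,0),\alpha)\}_{n=0}^\infty$, where $\mathscr{O}_n((0,0),\alpha)$ is the orbit of the prefractal billiard table $\Omega(S_{a,n})$ with initial condition $((0,0),\alpha)$, is a sequence of compatible periodic orbits. (2) If $\alpha\in B_a$, $n_0\in\mathbb{N}$ and $r<2a^{n_0}$ is an odd positive integer, then the sequence of compatible orbits $\{\mathscr{O}_n((\tfrac{r}{2a^{n_0}},0),\alpha)\}_{n=0}^\infty$ of the tables $\Omega(S_{a,n})$ with initial condition $((\tfrac{r}{2a^{n_0}},0),\alpha)$ is a sequence of compatible periodic orbits. Furthermore, in each case the sequence of compatible periodic orbits is eventually constant, and its trivial limit (the common path of the orbits from some index on) constitutes a periodic orbit of the self-similar Sierpinski carpet billiard table $\Omega(S_a)$.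
   Context: Let $Q=[0,1]^2$. For odd $a\geq3$: $S_{a,0}=Q$, and $S_{a,n}$ is obtained from $S_{a,n-1}$ (a union of closed squares of side $a^{-(n-1)}$) by dividing each such square into $a^2$ subsquares of side $a^{-n}$ and removing the open middle one; $S_a=\bigcap_n S_{a,n}$. A peripheral square is the boundary of a removed open square. $A_b=\{\tfrac pq: p+q\leq b,\ 0\leq p<q\leq b-1,\ p,q\in\mathbb{N}\cup\{0\},\ p+q \text{ odd}\}$ and $B_b=\{\tfrac pq: p+q\leq b-1,\ 0\leq p\leq q\leq b-2,\ p,q\in\mathbb{N},\ p,q\text{ odd}\}$ for odd $b\ge3$, with $A_1=\{0\}$. The prefractal billiard table $\Omega(S_{a,n})$ is the region $S_{a,n}$ with boundary $\partial S_{a,n}$ (the boundary of $Q$ together with the peripheral squares of side $\geq a^{-n}$); a billiard ball moves in straight lines and reflects off the boundary with angle of reflection equal to angle of incidence. At a corner of $Q$ reflection is well defined (the ball exits reflected through the angle bisector); if the ball hits a corner of a peripheral square, the trajectory terminates there (the orbit is singular). An initial condition $(x^0,\alpha)$ consists of a boundary point $x^0$ and an inward direction of slope $\alpha$ (i.e. $\alpha=\tan\theta^0$); its orbit is the sequence of successive collision points with their outgoing directions. An orbit is closed if it has finitely many elements, and periodic if it is nonsingular and there is a least $m\geq1$ with the $m$-th iterate of the billiard map equal to the initial condition. Initial conditions $(x_n^0,\alpha)$ for $\Omega(S_{a,n})$ and $(x_m^0,\alpha)$ for $\Omega(S_{a,m})$, $n>m$, with the same slope are compatible if $x_n^0,x_m^0$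 lie on a segment of direction $\alpha$ meeting $\partial S_{a,n}$ only at $x_n^0$; a sequence of orbits $\{\mathscr{O}_n\}_{n\geq N}$ of $\Omega(S_{a,n})$ with pairwise compatible initial conditions is a sequence of compatible orbits, and it is a sequence of compatible periodic orbits if every $\mathscr{O}_n$ is periodic. It is constant if the path traversed by $\mathscr{O}_{n+1}$ equals that traversed by $\mathscr{O}_n$ for all $n\geq N$, and eventually constant if this holds from some index on. A periodic orbit of $\Omega(S_a)$ is understood, in this paper, as the trivial limit (common path) of an eventually constant sequence of compatible periodic orbits. *)

theory Defs
  imports Complex_Main
begin

type_synonym pt = "real \<times> real"
type_synonym state = "pt \<times> pt"  (* collision point, outgoing direction vector *)

definition mid :: "nat \<Rightarrow> nat" where
  "mid a = (a - 1) div 2"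

text \<open>cells a k: index pairs (i,j) such that the closed square
  [i/a^k,(i+1)/a^k] x [j/a^k,(j+1)/a^k] is one of the squares making up S_{a,k}.\<close>
fun cells :: "nat \<Rightarrow> nat \<Rightarrow> (nat \<times> nat) set" where
  "cells a 0 = {(0,0)}"
| "cells a (Suc k) = {(a*i+u, a*j+w) | i j u w. (i,j) \<in> cells a k \<and> u < a \<and> w < a
                         \<and> \<not> (u = mid a \<and> w = mid a)}"

definition csq :: "pt \<Rightarrow> real \<Rightarrow> pt set" where
  "csq c s = {(x,y). fst c \<le> x \<and> x \<le> fst c + s \<and> snd c \<le> y \<and> y \<le> snd c + s}"

definition Sn :: "nat \<Rightarrow> nat \<Rightarrow> pt set" where
  "Sn a n = (\<Union>(i,j)\<in>cells a n. csq (real i / real a ^ n, real j / real a ^ n) (1 / real a ^ n))"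

text \<open>Peripheral squares of the table Omega(S_{a,n}): pairs (lower-left corner, side) of the
  open middle squares removed at the levels k = 1..n (side a^-k >= a^-n).\<close>
definition psq :: "nat \<Rightarrow> nat \<Rightarrow> (pt \<times> real) set" where
  "psq a n = {((real (a*i + mid a) / real a ^ k, real (a*j + mid a) / real a ^ k), 1 / real a ^ k)
               | k i j. 1 \<le> k \<and> k \<le> n \<and> (i,j) \<in> cells a (k - 1)}"

definition hedges :: "pt \<Rightarrow> real \<Rightarrow> pt set" where
  "hedges c s = {(x,y). fst c \<le> x \<and> x \<le> fst c + s \<and> (y = snd c \<or> y = snd c + s)}"
definition vedges :: "pt \<Rightarrow> real \<Rightarrow> pt set" where
  "vedges c s = {(x,y). snd c \<le> y \<and> y \<le> snd c + s \<and> (x = fst c \<or> x = fst c + s)}"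
definition sqcorners :: "pt \<Rightarrow> real \<Rightarrow> pt set" where
  "sqcorners c s = {(fst c, snd c), (fst c + s, snd c), (fst c, snd c + s), (fst c + s, snd c + s)}"

text \<open>The boundary \<partial>S_{a,n} = \<partial>Q together with the peripheral squares of level <= n,
  split into horizontal and vertical parts; corners of Q and of peripheral squares.\<close>
definition hbd :: "nat \<Rightarrow> nat \<Rightarrow> pt set" where
  "hbd a n = hedges (0,0) 1 \<union> (\<Union>(c,s)\<in>psq a n. hedges c s)"
definition vbd :: "nat \<Rightarrow> nat \<Rightarrow> pt set" where
  "vbd a n = vedges (0,0) 1 \<union> (\<Union>(c,s)\<in>psq a n. vedges c s)"
definition Qcorners :: "pt set" where
  "Qcorners = sqcorners (0,0) 1"
definition pcorners :: "nat \<Rightarrow> nat \<Rightarrow> pt set" where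
  "pcorners a n = (\<Union>(c,s)\<in>psq a n. sqcorners c s)"
definition bdry :: "nat \<Rightarrow> nat \<Rightarrow> pt set" where
  "bdry a n = hbd a n \<union> vbd a n"

definition ray :: "pt \<Rightarrow> pt \<Rightarrow> real \<Rightarrow> pt" where
  "ray x v t = (fst x + t * fst v, snd x + t * snd v)"

text \<open>t > 0 is a collision time: the ball reaches a corner, or crosses a horizontal edge
  with nonzero vertical velocity, or a vertical edge with nonzero horizontal velocity
  (gliding along an edge of the unit square is not a collision).\<close>
definition hit :: "nat \<Rightarrow> nat \<Rightarrow> pt \<Rightarrow> pt \<Rightarrow> real \<Rightarrow> bool" where
  "hit a n x v t \<longleftrightarrow> t > 0 \<and>
     (ray x v t \<in> Qcorners \<union> pcorners a n
      \<or> (ray x v t \<in> hbd a n \<and> snd v \<noteq> 0)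
      \<or> (ray x v t \<in> vbd a n \<and> fst v \<noteq> 0))"

text \<open>One step of the billiard map; None = the orbit terminates (singular: it hits a corner of a
  peripheral square).  At a corner of Q the ball is reflected back along the angle bisector.\<close>
definition bstep :: "nat \<Rightarrow> nat \<Rightarrow> state \<Rightarrow> state option" where
  "bstep a n s = (let x = fst s; v = snd s in
     if \<exists>t. hit a n x v t then
       (let p = ray x v (LEAST t. hit a n x v t) in
        if p \<in> pcorners a n then None
        else if p \<in> Qcorners then Some (p, (- fst v, - snd v))
        else if p \<in> hbd a n then Some (p, (fst v, - snd v))
        else Some (p, (- fst v, snd v)))
     else None)"

fun orbit :: "nat \<Rightarrow> nat \<Rightarrow> state \<Rightarrow> nat \<Rightarrow> state option" where
  "orbit a n s 0 = Some s"
| "orbit a n s (Suc k) = Option.bind (orbit a n s k) (bstep a n)"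

definition singular :: "nat \<Rightarrow> nat \<Rightarrow> state \<Rightarrow> bool" where
  "singular a n s \<longleftrightarrow> (\<exists>k. orbit a n s k = None)"

definition periodic :: "nat \<Rightarrow> nat \<Rightarrow> state \<Rightarrow> bool" where
  "periodic a n s \<longleftrightarrow> \<not> singular a n s \<and> (\<exists>m \<ge> 1. orbit a n s m = Some s)"

definition seg :: "pt \<Rightarrow> pt \<Rightarrow> pt set" where
  "seg p q = {(fst p + t * (fst q - fst p), snd p + t * (snd q - snd p)) | t. 0 \<le> t \<and> t \<le> 1}"

definition orbit_path :: "nat \<Rightarrow> nat \<Rightarrow> state \<Rightarrow> pt set" where
  "orbit_path a n s = (\<Union>k. case (orbit a n s k, orbit a n s (Suc k)) of
       (Some s1, Some s2) \<Rightarrow> seg (fst s1) (fst s2) | _ \<Rightarrow> {})"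

text \<open>Compatibility of initial conditions (x_n, v) on Omega(S_{a,n}) and (x_m, v) on Omega(S_{a,m}),
  n > m, with the same direction v: x_n, x_m lie on a segment of direction v meeting
  \<partial>S_{a,n} only at x_n.\<close>
definition compatible :: "nat \<Rightarrow> nat \<Rightarrow> state \<Rightarrow> state \<Rightarrow> bool" where
  "compatible a n sn sm \<longleftrightarrow> snd sn = snd sm \<and>
     (\<exists>t. fst sm = ray (fst sn) (snd sn) t \<and> seg (fst sn) (fst sm) \<inter> bdry a n \<subseteq> {fst sn})"

text \<open>A periodic orbit of Omega(S_a) (paper's definition): the common path of an eventually
  constant sequence of compatible periodic orbits {O_n}_{n>=N}.\<close>
definition periodic_orbit_Sa :: "nat \<Rightarrow> pt set \<Rightarrow> bool" where
  "periodic_orbit_Sa a P \<longleftrightarrow> (\<exists>N s. (\<forall>n\<ge>N. periodic a n (s n))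
      \<and> (\<forall>m n. N \<le> m \<and> m < n \<longrightarrow> compatible a n (s n) (s m))
      \<and> (\<exists>M\<ge>N. (\<forall>n\<ge>M. orbit_path a (Suc n) (s (Suc n)) = orbit_path a n (s n))
                 \<and> P = orbit_path a M (s M)))"

definition A_set :: "nat \<Rightarrow> real set" where
  "A_set b = (if b = 1 then {0} else
     {real p / real q | p q. p + q \<le> b \<and> p < q \<and> q \<le> b - 1 \<and> odd (p + q)})"

definition B_set :: "nat \<Rightarrow> real set" where
  "B_set b = {real p / real q | p q. p + q \<le> b - 1 \<and> 1 \<le> p \<and> p \<le> q \<and> q \<le> b - 2
               \<and> odd p \<and> odd q}"

end

theory Submission
  imports Defs
begin

text \<open>
  A ball of slope \<open>\<plusminus>p/q\<close> with unit horizontal speed keeps \<open>K = q(v\<^sub>x y - v\<^sub>y x)\<close> constant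
  along each segment of its path. A reflection replaces \<open>K\<close> by \<open>-K\<close> plus twice an integer multiple
  of \<open>a\<^sup>-\<^sup>n\<close>, because every wall of \<open>\<Omega>(S\<^sub>a\<^sub>,\<^sub>n)\<close> lies on the grid \<open>a\<^sup>-\<^sup>n\<int>\<close>. Hence \<open>K\<close> stays in the
  bounded part of the coset \<open>\<plusminus>c + 2a\<^sup>-\<^sup>n\<int>\<close> fixed by the initial condition, only finitely many
  states occur, and since the billiard map is reversible the initial state recurs.

  For the initial conditions of the theorem \<open>c = 0\<close>, resp. \<open>c = pr/(2a\<^sup>n\<^sup>0)\<close>. A parity argument using
  \<open>p + q < a\<close> shows that no line with such a \<open>K\<close> meets a peripheral square of level above \<open>0\<close>,
  resp. \<open>n\<^sub>0\<close>, and that the orbit never hits a corner of a peripheral square; so from that level on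
  the orbit does not depend on \<open>n\<close>.
\<close>

section \<open>The prefractal carpet\<close>

lemma mid_odd:
  assumes "odd a" "a \<ge> 3"
  shows "2 * mid a + 1 = a" "1 \<le> mid a"
  using assms unfolding mid_def by presburger+

lemma cells_less_power:
  assumes "a \<ge> 1" "(i, j) \<in> cells a k"
  shows "i < a ^ k \<and> j < a ^ k"
  using assms(2)
proof (induction k arbitrary: i j)
  case 0
  then show ?case by simp
next
  case (Suc k)
  then obtain i0 j0 u w where e: "i = a * i0 + u" "j = a * j0 + w" "(i0, j0) \<in> cells a k" "u < a" "w < a"
    by auto
  with Suc.IH[OF e(3)] have "i0 + 1 \<le> a ^ k" "j0 + 1 \<le> a ^ k" by auto
  then have "a * (i0 + 1) \<le> a * a ^ k" "a * (j0 + 1) \<le> a * a ^ k" using mult_le_mono2 by blast+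
  moreover have "i < a * (i0 + 1)" "j < a * (j0 + 1)" using e by auto
  ultimately show ?case by auto
qed

definition psquare :: "nat \<Rightarrow> nat \<Rightarrow> nat \<Rightarrow> nat \<Rightarrow> pt \<times> real" where
  "psquare a k i j =
     ((real (a * i + mid a) / real a ^ k, real (a * j + mid a) / real a ^ k), 1 / real a ^ k)"

lemma mem_psq_iff:
  "x \<in> psq a n \<longleftrightarrow> (\<exists>k i j. 1 \<le> k \<and> k \<le> n \<and> (i, j) \<in> cells a (k - 1) \<and> x = psquare a k i j)"
  unfolding psq_def psquare_def by blast

lemma psq_0: "psq a 0 = {}"
  unfolding psq_def by auto

lemma psq_mono: "m \<le> n \<Longrightarrow> psq a m \<subseteq> psq a n"
  unfolding psq_def by fastforce

lemma psq_new_levels: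
  assumes "x \<in> psq a n" "x \<notin> psq a m"
  obtains k i j where "m < k" "k \<le> n" "(i, j) \<in> cells a (k - 1)" "x = psquare a k i j"
  using assms unfolding mem_psq_iff by (metis not_le)

lemma finite_psq:
  assumes "a \<ge> 1"
  shows "finite (psq a n)"
proof -
  have "psq a n \<subseteq> (\<lambda>(k, i, j). psquare a k i j) ` ({..n} \<times> {..<a ^ n} \<times> {..<a ^ n})"
  proof
    fix x assume "x \<in> psq a n"
    then obtain k i j where kij: "1 \<le> k" "k \<le> n" "(i, j) \<in> cells a (k - 1)" "x = psquare a k i j"
      unfolding mem_psq_iff by blast
    have "a ^ (k - 1) \<le> a ^ n" using assms kij(2) by (simp add: power_increasing)
    then have "i < a ^ n" "j < a ^ n" using cells_less_power[OF assms kij(3)] by auto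
    then show "x \<in> (\<lambda>(k, i, j). psquare a k i j) ` ({..n} \<times> {..<a ^ n} \<times> {..<a ^ n})"
      using kij by (intro image_eqI[where x = "(k, i, j)"]) auto
  qed
  then show ?thesis by (rule finite_subset) auto
qed

lemma psq_in_open_unit_square:
  assumes "odd a" "a \<ge> 3" "x \<in> psq a n" "z \<in> csq (fst x) (snd x)"
  shows "0 < fst z \<and> fst z < 1 \<and> 0 < snd z \<and> snd z < 1"
proof -
  obtain k i j where kij: "1 \<le> k" "(i, j) \<in> cells a (k - 1)" "x = psquare a k i j"
    using assms(3) unfolding mem_psq_iff by blast
  have m: "2 * mid a + 1 = a" "1 \<le> mid a" using mid_odd[OF assms(1,2)] by auto
  have "i + 1 \<le> a ^ (k - 1)" "j + 1 \<le> a ^ (k - 1)"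
    using cells_less_power[of a i j "k - 1"] kij(2) assms(2) by auto
  then have "a * (i + 1) \<le> a * a ^ (k - 1)" "a * (j + 1) \<le> a * a ^ (k - 1)"
    using mult_le_mono2 by blast+
  moreover have "a ^ k = a * a ^ (k - 1)" using kij(1) by (metis Suc_diff_le diff_Suc_1 power_Suc)
  ultimately have "a * i + mid a + 1 < a ^ k" "a * j + mid a + 1 < a ^ k"
    using m by (auto simp: algebra_simps)
  then have "real (a * i + mid a + 1) < real a ^ k" "real (a * j + mid a + 1) < real a ^ k"
    by (metis of_nat_less_iff of_nat_power)+
  moreover have "real a ^ k > 0" using assms(2) by simp
  ultimately have "real (a * i + mid a + 1) / real a ^ k < 1" "real (a * j + mid a + 1) / real a ^ k < 1"
    by (simp_all only: divide_less_eq_1_pos)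
  moreover have "0 < a * i + mid a" "0 < a * j + mid a" using m(2) by simp_all
  then have "real (a * i + mid a) / real a ^ k > 0" "real (a * j + mid a) / real a ^ k > 0"
    using assms(2) by (simp_all only: of_nat_0_less_iff[symmetric] zero_less_power divide_pos_pos)
  moreover have "real (a * i + mid a) / real a ^ k + 1 / real a ^ k = real (a * i + mid a + 1) / real a ^ k"
    "real (a * j + mid a) / real a ^ k + 1 / real a ^ k = real (a * j + mid a + 1) / real a ^ k"
    by (simp_all add: add_divide_distrib)
  ultimately have "0 < fst (fst x) \<and> fst (fst x) + snd x < 1 \<and> 0 < snd (fst x) \<and> snd (fst x) + snd x < 1"
    unfolding kij(3) psquare_def by auto
  then show ?thesis using assms(4) unfolding csq_def by auto
qed

definition grid :: "nat \<Rightarrow> nat \<Rightarrow> real set" where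
  "grid a n = {x. \<exists>k::int. x = of_int k / real a ^ n}"

lemma of_nat_div_power_in_grid:
  assumes "a > 0" "k \<le> n"
  shows "real N / real a ^ k \<in> grid a n"
proof -
  have "real a ^ n = real a ^ k * real a ^ (n - k)"
    using assms(2) by (metis le_add_diff_inverse power_add)
  then have "real N / real a ^ k = of_int (int (N * a ^ (n - k))) / real a ^ n"
    using assms(1) by simp
  then show ?thesis unfolding grid_def by blast
qed

lemma psq_sides_in_grid:
  assumes "a > 0" "x \<in> psq a n"
  shows "fst (fst x) \<in> grid a n" "snd (fst x) \<in> grid a n"
    "fst (fst x) + snd x \<in> grid a n" "snd (fst x) + snd x \<in> grid a n"
proof -
  obtain k i j where kij: "k \<le> n" "x = psquare a k i j"
    using assms(2) unfolding mem_psq_iff by blast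
  have e: "real (a * i + mid a) / real a ^ k + 1 / real a ^ k = real (a * i + mid a + 1) / real a ^ k"
    "real (a * j + mid a) / real a ^ k + 1 / real a ^ k = real (a * j + mid a + 1) / real a ^ k"
    by (simp_all add: add_divide_distrib)
  note grid = of_nat_div_power_in_grid[OF assms(1) kij(1)]
  show "fst (fst x) \<in> grid a n" "snd (fst x) \<in> grid a n"
    "fst (fst x) + snd x \<in> grid a n" "snd (fst x) + snd x \<in> grid a n"
    using grid[of "a * i + mid a"] grid[of "a * j + mid a"]
      grid[of "a * i + mid a + 1"] grid[of "a * j + mid a + 1"]
    by (simp_all only: kij(2) psquare_def fst_conv snd_conv e)
qed

lemma zero_one_in_grid: "a > 0 \<Longrightarrow> 0 \<in> grid a n \<and> 1 \<in> grid a n"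
  using of_nat_div_power_in_grid[of a n n 0] of_nat_div_power_in_grid[of a 0 n 1] by auto

lemma hbd_iff: "z \<in> hbd a n \<longleftrightarrow> z \<in> hedges (0,0) 1 \<or> (\<exists>x\<in>psq a n. z \<in> hedges (fst x) (snd x))"
  unfolding hbd_def case_prod_unfold by blast

lemma vbd_iff: "z \<in> vbd a n \<longleftrightarrow> z \<in> vedges (0,0) 1 \<or> (\<exists>x\<in>psq a n. z \<in> vedges (fst x) (snd x))"
  unfolding vbd_def case_prod_unfold by blast

lemma pcorners_iff: "z \<in> pcorners a n \<longleftrightarrow> (\<exists>x\<in>psq a n. z \<in> sqcorners (fst x) (snd x))"
  unfolding pcorners_def case_prod_unfold by blast

lemma pcorners_0: "pcorners a 0 = {}"
  unfolding pcorners_def psq_0 by simp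

lemma edges_subset_csq:
  "hedges c s \<subseteq> csq c s" "vedges c s \<subseteq> csq c s" "s \<ge> 0 \<Longrightarrow> sqcorners c s \<subseteq> csq c s"
  unfolding sqcorners_def hedges_def vedges_def csq_def by auto

lemma psq_side_nonneg: "x \<in> psq a n \<Longrightarrow> snd x \<ge> 0"
  unfolding mem_psq_iff psquare_def by auto

lemma corner_in_hbd_vbd:
  assumes "z \<in> Qcorners \<union> pcorners a n"
  shows "z \<in> hbd a n \<and> z \<in> vbd a n"
proof -
  have corners: "sqcorners c s \<subseteq> hedges c s \<inter> vedges c s" if "s \<ge> 0" for c :: pt and s :: real
    using that unfolding sqcorners_def hedges_def vedges_def by auto
  consider "z \<in> sqcorners (0,0) 1" | x where "x \<in> psq a n" "z \<in> sqcorners (fst x) (snd x)"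
    using assms by (auto simp: Qcorners_def pcorners_iff)
  then show ?thesis
  proof cases
    case 1
    then show ?thesis using corners[of 1 "(0,0)"] unfolding hbd_iff vbd_iff by auto
  next
    case 2
    then show ?thesis using corners[OF psq_side_nonneg[OF 2(1)]] unfolding hbd_iff vbd_iff by blast
  qed
qed

lemma pcorners_in_open_unit_square:
  assumes "odd a" "a \<ge> 3" "z \<in> pcorners a n"
  shows "0 < fst z \<and> fst z < 1 \<and> 0 < snd z \<and> snd z < 1"
proof -
  obtain x where "x \<in> psq a n" "z \<in> sqcorners (fst x) (snd x)"
    using assms(3) unfolding pcorners_iff by blast
  then show ?thesis
    using psq_in_open_unit_square[OF assms(1,2)] edges_subset_csq(3)[OF psq_side_nonneg] by blast
qed

lemma hbd_bottom_top: "0 \<le> x \<Longrightarrow> x \<le> 1 \<Longrightarrow> y = 0 \<or> y = 1 \<Longrightarrow> (x, y) \<in> hbd a n"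
  unfolding hbd_iff hedges_def by auto

lemma vbd_left_right: "0 \<le> y \<Longrightarrow> y \<le> 1 \<Longrightarrow> x = 0 \<or> x = 1 \<Longrightarrow> (x, y) \<in> vbd a n"
  unfolding vbd_iff vedges_def by auto

lemma hbd_on_vertical_side:
  assumes "odd a" "a \<ge> 3" "z \<in> hbd a n" "fst z = 0 \<or> fst z = 1"
  shows "z \<in> Qcorners"
proof -
  have "z \<notin> hedges (fst x) (snd x)" if "x \<in> psq a n" for x
    using psq_in_open_unit_square[OF assms(1,2) that] edges_subset_csq(1) assms(4) by fastforce
  then have "z \<in> hedges (0,0) 1" using assms(3) unfolding hbd_iff by blast
  then show ?thesis
    using assms(4) unfolding hedges_def Qcorners_def sqcorners_def by (cases z) auto
qed

definition hlines :: "nat \<Rightarrow> nat \<Rightarrow> real set" where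
  "hlines a n = {0, 1} \<union> (\<lambda>x. snd (fst x)) ` psq a n \<union> (\<lambda>x. snd (fst x) + snd x) ` psq a n"

definition vlines :: "nat \<Rightarrow> nat \<Rightarrow> real set" where
  "vlines a n = {0, 1} \<union> (\<lambda>x. fst (fst x)) ` psq a n \<union> (\<lambda>x. fst (fst x) + snd x) ` psq a n"

lemma finite_hlines: "a \<ge> 1 \<Longrightarrow> finite (hlines a n)"
  unfolding hlines_def using finite_psq by auto

lemma finite_vlines: "a \<ge> 1 \<Longrightarrow> finite (vlines a n)"
  unfolding vlines_def using finite_psq by auto

lemma hlines_subset_grid: "a > 0 \<Longrightarrow> hlines a n \<subseteq> grid a n"
  unfolding hlines_def using psq_sides_in_grid zero_one_in_grid by (auto simp del: of_nat_power)

lemma vlines_subset_grid: "a > 0 \<Longrightarrow> vlines a n \<subseteq> grid a n"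
  unfolding vlines_def using psq_sides_in_grid zero_one_in_grid by (auto simp del: of_nat_power)

lemma hbd_snd_in_hlines:
  assumes "z \<in> hbd a n"
  shows "snd z \<in> hlines a n"
proof -
  consider "z \<in> hedges (0,0) 1" | x where "x \<in> psq a n" "z \<in> hedges (fst x) (snd x)"
    using assms unfolding hbd_iff by blast
  then show ?thesis
  proof cases
    case 2
    then have "snd z = snd (fst x) \<or> snd z = snd (fst x) + snd x" unfolding hedges_def by auto
    then show ?thesis unfolding hlines_def using 2(1) by blast
  qed (auto simp: hlines_def hedges_def)
qed

lemma vbd_fst_in_vlines:
  assumes "z \<in> vbd a n"
  shows "fst z \<in> vlines a n"
proof -
  consider "z \<in> vedges (0,0) 1" | x where "x \<in> psq a n" "z \<in> vedges (fst x) (snd x)"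
    using assms unfolding vbd_iff by blast
  then show ?thesis
  proof cases
    case 2
    then have "fst z = fst (fst x) \<or> fst z = fst (fst x) + snd x" unfolding vedges_def by auto
    then show ?thesis unfolding vlines_def using 2(1) by blast
  qed (auto simp: vlines_def vedges_def)
qed

section \<open>The billiard map\<close>

lemma ray_fst [simp]: "fst (ray x v t) = fst x + t * fst v"
  and ray_snd [simp]: "snd (ray x v t) = snd x + t * snd v"
  unfolding ray_def by auto

lemma hit_on_lines:
  assumes "hit a n x v t" "v \<noteq> (0,0)"
  shows "(snd v \<noteq> 0 \<and> snd (ray x v t) \<in> hlines a n) \<or> (fst v \<noteq> 0 \<and> fst (ray x v t) \<in> vlines a n)"
proof -
  have "ray x v t \<in> Qcorners \<union> pcorners a n \<or> (ray x v t \<in> hbd a n \<and> snd v \<noteq> 0)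
      \<or> (ray x v t \<in> vbd a n \<and> fst v \<noteq> 0)"
    using assms(1) unfolding hit_def by auto
  then show ?thesis
  proof (elim disjE)
    assume "ray x v t \<in> Qcorners \<union> pcorners a n"
    then have "snd (ray x v t) \<in> hlines a n" "fst (ray x v t) \<in> vlines a n"
      using corner_in_hbd_vbd hbd_snd_in_hlines vbd_fst_in_vlines by blast+
    then show ?thesis using assms(2) by (cases v) auto
  qed (use hbd_snd_in_hlines vbd_fst_in_vlines in blast)+
qed

lemma finite_hits:
  assumes "v \<noteq> (0,0)" "a \<ge> 1"
  shows "finite {t. hit a n x v t}"
proof -
  have "{t. hit a n x v t}
      \<subseteq> (\<lambda>h. (h - snd x) / snd v) ` hlines a n \<union> (\<lambda>h. (h - fst x) / fst v) ` vlines a n"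
  proof
    fix t assume "t \<in> {t. hit a n x v t}"
    then have "(snd v \<noteq> 0 \<and> snd x + t * snd v \<in> hlines a n) \<or> (fst v \<noteq> 0 \<and> fst x + t * fst v \<in> vlines a n)"
      using hit_on_lines[OF _ assms(1)] by fastforce
    then show "t \<in> (\<lambda>h. (h - snd x) / snd v) ` hlines a n \<union> (\<lambda>h. (h - fst x) / fst v) ` vlines a n"
    proof (elim disjE conjE)
      assume "snd v \<noteq> 0" "snd x + t * snd v \<in> hlines a n"
      then show ?thesis by (intro UnI1 image_eqI[where x = "snd x + t * snd v"]) auto
    next
      assume "fst v \<noteq> 0" "fst x + t * fst v \<in> vlines a n"
      then show ?thesis by (intro UnI2 image_eqI[where x = "fst x + t * fst v"]) auto
    qed
  qed
  then show ?thesis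
    using finite_hlines[OF assms(2)] finite_vlines[OF assms(2)] by (meson finite_UnI finite_imageI finite_subset)
qed

lemma first_hit:
  assumes "v \<noteq> (0,0)" "a \<ge> 1" "hit a n x v t0"
  obtains T where "hit a n x v T" "\<And>t. hit a n x v t \<Longrightarrow> T \<le> t"
proof -
  let ?S = "{t. hit a n x v t}"
  have "finite ?S" "?S \<noteq> {}" using finite_hits[OF assms(1,2)] assms(3) by auto
  then show thesis using that[of "Min ?S"] Min_in Min_le by auto
qed

definition reflect :: "nat \<Rightarrow> nat \<Rightarrow> pt \<Rightarrow> pt \<Rightarrow> pt" where
  "reflect a n p v = (if p \<in> Qcorners then (- fst v, - snd v)
     else if p \<in> hbd a n then (fst v, - snd v) else (- fst v, snd v))"

lemma reflect_abs: "\<bar>fst (reflect a n p v)\<bar> = \<bar>fst v\<bar>" "\<bar>snd (reflect a n p v)\<bar> = \<bar>snd v\<bar>"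
  unfolding reflect_def by auto

lemma reflect_inj: "reflect a n p v = reflect a n p w \<Longrightarrow> v = w"
  unfolding reflect_def by (cases v; cases w) (auto split: if_splits)

lemma bstep_first_hit:
  assumes "hit a n x v T" "\<And>t. hit a n x v t \<Longrightarrow> T \<le> t"
  shows "bstep a n (x, v) =
    (if ray x v T \<in> pcorners a n then None else Some (ray x v T, reflect a n (ray x v T) v))"
proof -
  have "(LEAST t. hit a n x v t) = T" by (rule Least_equality) (use assms in auto)
  then show ?thesis unfolding bstep_def Let_def reflect_def using assms(1) by auto
qed

text \<open>Running the ball backwards from such a state registers a collision at its position; this
  makes the billiard map injective on these states.\<close>
definition collision_state :: "nat \<Rightarrow> nat \<Rightarrow> state \<Rightarrow> bool" where
  "collision_state a n s \<longleftrightarrow> fst s \<notin> pcorners a n \<and> (fst s \<in> Qcorners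
     \<or> (fst s \<in> hbd a n \<and> snd (snd s) \<noteq> 0) \<or> (fst s \<in> vbd a n \<and> fst (snd s) \<noteq> 0))"

lemma bstep_reverse:
  assumes "a \<ge> 1" "v \<noteq> (0,0)" "collision_state a n (x, v)" "bstep a n (x, v) = Some (z, w)"
  shows "w = reflect a n z v \<and> bstep a n (z, (- fst v, - snd v)) = Some (x, reflect a n x (- fst v, - snd v))"
proof -
  obtain t0 where "hit a n x v t0"
    using assms(4) unfolding bstep_def Let_def by (auto split: if_splits)
  then obtain T where hT: "hit a n x v T" and first: "\<And>t. hit a n x v t \<Longrightarrow> T \<le> t"
    using first_hit[OF assms(2,1)] by blast
  have zw: "z = ray x v T" "w = reflect a n (ray x v T) v"
    using assms(4) bstep_first_hit[OF hT first] by (auto split: if_splits)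
  let ?u = "(- fst v, - snd v)"
  have reversed: "ray z ?u t = ray x v (T - t)" for t
    unfolding zw ray_def by (auto simp: algebra_simps)
  then have reversed_T: "ray z ?u T = x" by (simp add: ray_def)
  have "T > 0" using hT unfolding hit_def by auto
  then have hT': "hit a n z ?u T"
    using assms(3) unfolding hit_def collision_state_def reversed_T by auto
  have first': "T \<le> t" if "hit a n z ?u t" for t
  proof (rule ccontr)
    assume "\<not> T \<le> t"
    then have "hit a n x v (T - t)" using that reversed[of t] unfolding hit_def by auto
    then show False using first[of "T - t"] that unfolding hit_def by auto
  qed
  have "x \<notin> pcorners a n" using assms(3) unfolding collision_state_def by auto
  then show ?thesis using zw bstep_first_hit[OF hT' first'] reversed_T by simp
qed

lemma bstep_inj:
  assumes "a \<ge> 1" "snd s1 \<noteq> (0,0)" "snd s2 \<noteq> (0,0)" "collision_state a n s1" "collision_state a n s2"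
    "bstep a n s1 = Some s'" "bstep a n s2 = Some s'"
  shows "s1 = s2"
proof -
  obtain x1 v1 x2 v2 z w where e: "s1 = (x1, v1)" "s2 = (x2, v2)" "s' = (z, w)"
    by (metis prod.exhaust)
  note r1 = bstep_reverse[OF assms(1), of v1 n x1 z w] and r2 = bstep_reverse[OF assms(1), of v2 n x2 z w]
  have "v1 = v2" using r1 r2 assms e reflect_inj by (metis snd_conv)
  then show ?thesis using r1 r2 assms e by auto
qed

lemma funpow_return:
  assumes "finite X" "g ` X \<subseteq> X" "inj_on g X" "x \<in> X"
  obtains d where "d \<ge> 1" "(g ^^ d) x = x"
proof -
  have X: "(g ^^ k) x \<in> X" for k
    by (induction k) (use assms(2,4) in auto)
  have "\<not> inj (\<lambda>k. (g ^^ k) x)"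
  proof
    assume "inj (\<lambda>k. (g ^^ k) x)"
    moreover have "finite (range (\<lambda>k. (g ^^ k) x))"
      using X assms(1) by (meson finite_subset image_subsetI)
    ultimately show False using finite_imageD by blast
  qed
  then obtain i j where ij: "i < j" "(g ^^ i) x = (g ^^ j) x"
    unfolding inj_def by (metis linorder_neqE_nat)
  have cancel: "(g ^^ d) x = x" if "(g ^^ (i + d)) x = (g ^^ i) x" for i d
    using that
  proof (induction i)
    case (Suc i)
    then have "g ((g ^^ (i + d)) x) = g ((g ^^ i) x)" by simp
    then have "(g ^^ (i + d)) x = (g ^^ i) x" using inj_onD[OF assms(3)] X by blast
    then show ?case by (rule Suc.IH)
  qed simp
  have "(g ^^ (j - i)) x = x" using ij by (intro cancel[of i]) simp
  then show thesis using that[of "j - i"] ij(1) by auto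
qed

lemma periodic_of_invariant:
  assumes "a \<ge> 1" "finite {s. P s}" "P s0"
    and closed: "\<And>s. P s \<Longrightarrow> \<exists>s'. bstep a n s = Some s' \<and> P s'"
    and collision: "\<And>s. P s \<Longrightarrow> collision_state a n s \<and> snd s \<noteq> (0,0)"
  shows "periodic a n s0"
proof -
  define g where "g s = the (bstep a n s)" for s
  have g: "bstep a n s = Some (g s) \<and> P (g s)" if "P s" for s
    using closed[OF that] unfolding g_def by auto
  have orbit: "orbit a n s0 k = Some ((g ^^ k) s0) \<and> P ((g ^^ k) s0)" for k
    by (induction k) (use assms(3) g in auto)
  have "inj_on g {s. P s}"
  proof (rule inj_onI)
    fix s1 s2 assume "s1 \<in> {s. P s}" "s2 \<in> {s. P s}" "g s1 = g s2"
    then show "s1 = s2" using bstep_inj[OF assms(1)] collision g by (metis mem_Collect_eq)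
  qed
  moreover have "g ` {s. P s} \<subseteq> {s. P s}" using g by auto
  ultimately obtain d where d: "d \<ge> 1" "(g ^^ d) s0 = s0"
    using funpow_return[OF assms(2)] assms(3) by blast
  have "\<not> singular a n s0" unfolding singular_def using orbit by auto
  moreover have "orbit a n s0 d = Some s0" using orbit[of d] d(2) by simp
  ultimately show ?thesis unfolding periodic_def using d(1) by blast
qed

definition slope_state :: "real \<Rightarrow> state \<Rightarrow> bool" where
  "slope_state \<alpha> s \<longleftrightarrow> \<bar>fst (snd s)\<bar> = 1 \<and> \<bar>snd (snd s)\<bar> = \<alpha> \<and> fst s \<in> csq (0,0) 1
     \<and> (fst (fst s) = 0 \<longrightarrow> fst (snd s) > 0) \<and> (fst (fst s) = 1 \<longrightarrow> fst (snd s) < 0)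
     \<and> (snd (fst s) = 0 \<longrightarrow> snd (snd s) \<ge> 0) \<and> (snd (fst s) = 1 \<longrightarrow> snd (snd s) \<le> 0)"

lemma unit_square_iff: "z \<in> csq (0,0) 1 \<longleftrightarrow> 0 \<le> fst z \<and> fst z \<le> 1 \<and> 0 \<le> snd z \<and> snd z \<le> 1"
  unfolding csq_def by (cases z) auto

lemma unit_interval_exit:
  fixes u w :: real
  assumes "0 \<le> u" "u \<le> 1" "w \<noteq> 0" "u = 0 \<longrightarrow> w > 0" "u = 1 \<longrightarrow> w < 0"
  obtains \<tau> where "\<tau> > 0" "u + \<tau> * w = 0 \<or> u + \<tau> * w = 1"
    "\<And>t. 0 \<le> t \<Longrightarrow> t \<le> \<tau> \<Longrightarrow> 0 \<le> u + t * w \<and> u + t * w \<le> 1"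
proof (cases "w > 0")
  case True
  show ?thesis
  proof (rule that[of "(1 - u) / w"])
    show "(1 - u) / w > 0" using True assms(2,5) by auto
    show "u + (1 - u) / w * w = 0 \<or> u + (1 - u) / w * w = 1" using True by simp
    fix t assume "0 \<le> t" "t \<le> (1 - u) / w"
    moreover have "t * w \<le> 1 - u \<longleftrightarrow> t \<le> (1 - u) / w" using True by (simp add: pos_le_divide_eq)
    moreover have "0 \<le> t * w" using \<open>0 \<le> t\<close> True by simp
    ultimately show "0 \<le> u + t * w \<and> u + t * w \<le> 1" using assms(1) by linarith
  qed
next
  case False
  then have w: "- w > 0" using assms(3) by simp
  have "u > 0" using assms(1,4) w by auto
  show ?thesis
  proof (rule that[of "u / - w"])
    show "u / - w > 0" using \<open>u > 0\<close> w by (intro divide_pos_pos)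
    show "u + u / - w * w = 0 \<or> u + u / - w * w = 1" using w by simp
    fix t assume "0 \<le> t" "t \<le> u / - w"
    moreover have "t * - w \<le> u \<longleftrightarrow> t \<le> u / - w" by (rule pos_le_divide_eq[OF w, symmetric])
    moreover have "0 \<le> t * - w" using \<open>0 \<le> t\<close> w by (simp only: zero_le_mult_iff) simp
    ultimately show "0 \<le> u + t * w \<and> u + t * w \<le> 1" using assms(2) by auto
  qed
qed

lemma slope_state_exit:
  assumes "slope_state \<alpha> (x, v)"
  obtains T where "hit a n x v T" "\<And>t. 0 \<le> t \<Longrightarrow> t \<le> T \<Longrightarrow> ray x v t \<in> csq (0,0) 1"
proof -
  have v: "\<bar>fst v\<bar> = 1" and x: "0 \<le> fst x" "fst x \<le> 1" "0 \<le> snd x" "snd x \<le> 1"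
    and inward: "fst x = 0 \<longrightarrow> fst v > 0" "fst x = 1 \<longrightarrow> fst v < 0"
      "snd x = 0 \<longrightarrow> snd v \<ge> 0" "snd x = 1 \<longrightarrow> snd v \<le> 0"
    using assms unfolding slope_state_def unit_square_iff by auto
  obtain \<tau>x where \<tau>x: "\<tau>x > 0" "fst x + \<tau>x * fst v = 0 \<or> fst x + \<tau>x * fst v = 1"
      "\<And>t. 0 \<le> t \<Longrightarrow> t \<le> \<tau>x \<Longrightarrow> 0 \<le> fst x + t * fst v \<and> fst x + t * fst v \<le> 1"
    using unit_interval_exit[OF x(1,2) _ inward(1,2)] v by (metis abs_0 zero_neq_one)
  show thesis
  proof (cases "\<forall>t. 0 \<le> t \<and> t \<le> \<tau>x \<longrightarrow> 0 \<le> snd x + t * snd v \<and> snd x + t * snd v \<le> 1")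
    case True
    then have "ray x v \<tau>x \<in> vbd a n"
      using vbd_left_right \<tau>x(1,2) unfolding ray_def by auto
    then have "hit a n x v \<tau>x" using \<tau>x(1) v unfolding hit_def by auto
    then show thesis using that True \<tau>x(3) unfolding unit_square_iff by auto
  next
    case False
    then have "snd v \<noteq> 0" using x(3,4) by auto
    then have "snd x = 0 \<longrightarrow> snd v > 0" "snd x = 1 \<longrightarrow> snd v < 0" using inward(3,4) by auto
    then obtain \<tau>y where \<tau>y: "\<tau>y > 0" "snd x + \<tau>y * snd v = 0 \<or> snd x + \<tau>y * snd v = 1"
        "\<And>t. 0 \<le> t \<Longrightarrow> t \<le> \<tau>y \<Longrightarrow> 0 \<le> snd x + t * snd v \<and> snd x + t * snd v \<le> 1"
      using unit_interval_exit[OF x(3,4) \<open>snd v \<noteq> 0\<close>] by blast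
    have "\<tau>y < \<tau>x" using False \<tau>y(3) by force
    then have "ray x v \<tau>y \<in> hbd a n"
      using hbd_bottom_top \<tau>x(3) \<tau>y(1,2) unfolding ray_def by auto
    then have "hit a n x v \<tau>y" using \<tau>y(1) \<open>snd v \<noteq> 0\<close> unfolding hit_def by auto
    then show thesis using that \<tau>x(3) \<tau>y(3) \<open>\<tau>y < \<tau>x\<close> unfolding unit_square_iff by auto
  qed
qed

lemma arrival_direction:
  fixes u w T :: real
  assumes "0 \<le> u" "u \<le> 1" "T > 0"
  shows "u + T * w = 0 \<Longrightarrow> w \<le> 0" "u + T * w = 1 \<Longrightarrow> w \<ge> 0"
  using assms by (smt (verit) mult_pos_pos mult_pos_neg)+

lemma reflect_vertical_side:
  assumes "odd a" "a \<ge> 3" "fst p = 0 \<or> fst p = 1"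
  shows "fst (reflect a n p v) = - fst v"
  using hbd_on_vertical_side[OF assms(1,2) _ assms(3)] unfolding reflect_def by auto

lemma reflect_horizontal_side:
  assumes "p \<in> csq (0,0) 1" "snd p = 0 \<or> snd p = 1"
  shows "snd (reflect a n p v) = - snd v"
  using assms hbd_bottom_top[of "fst p" "snd p" a n] unfolding reflect_def unit_square_iff
  by (cases p) auto

lemma slope_state_reflect:
  assumes "odd a" "a \<ge> 3" "slope_state \<alpha> (x, v)" "hit a n x v T" "\<And>t. hit a n x v t \<Longrightarrow> T \<le> t"
  shows "slope_state \<alpha> (ray x v T, reflect a n (ray x v T) v)"
proof -
  obtain T0 where "hit a n x v T0" and inQ: "\<And>t. 0 \<le> t \<Longrightarrow> t \<le> T0 \<Longrightarrow> ray x v t \<in> csq (0,0) 1"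
    using slope_state_exit[OF assms(3)] by blast
  have T: "T > 0" using assms(4) unfolding hit_def by simp
  then have Q: "ray x v T \<in> csq (0,0) 1" using inQ assms(5)[OF \<open>hit a n x v T0\<close>] by simp
  have x: "0 \<le> fst x" "fst x \<le> 1" "0 \<le> snd x" "snd x \<le> 1"
    and v: "fst v = 1 \<or> fst v = -1" "\<bar>snd v\<bar> = \<alpha>"
    using assms(3) unfolding slope_state_def unit_square_iff by auto
  let ?p = "ray x v T" and ?w = "reflect a n (ray x v T) v"
  have "fst ?w = - fst v" if "fst ?p = 0 \<or> fst ?p = 1"
    using reflect_vertical_side[OF assms(1,2) that] .
  moreover have "snd ?w = - snd v" if "snd ?p = 0 \<or> snd ?p = 1"
    using reflect_horizontal_side[OF Q that] .
  moreover note arrival_direction[OF x(1,2) T, of "fst v"] arrival_direction[OF x(3,4) T, of "snd v"]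
  ultimately show ?thesis
    using Q v reflect_abs[of a n ?p v] unfolding slope_state_def by auto
qed

lemma slope_state_velocity:
  assumes "slope_state (real p / real q) (x, v)"
  obtains s1 s2 :: int where "s1 = 1 \<or> s1 = -1" "s2 = 1 \<or> s2 = -1"
    "v = (of_int s1, of_int s2 * real p / real q)"
proof -
  have "fst v = 1 \<or> fst v = -1" "snd v = real p / real q \<or> snd v = - (real p / real q)"
    using assms unfolding slope_state_def by (auto simp: abs_if split: if_splits)
  then show thesis using that[of 1 1] that[of 1 "-1"] that[of "-1" 1] that[of "-1" "-1"]
    by (cases v) auto
qed

section \<open>The line constant\<close>

definition line_const :: "real \<Rightarrow> state \<Rightarrow> real" where
  "line_const q s = q * (fst (snd s) * snd (fst s) - snd (snd s) * fst (fst s))"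

lemma line_const_ray: "line_const q (ray x v t, v) = line_const q (x, v)"
  unfolding line_const_def ray_def by (simp add: algebra_simps)

lemma line_const_reflect:
  "line_const q (p, reflect a n p v) = - line_const q (p, v)
     + (if p \<in> Qcorners then 0 else if p \<in> hbd a n then 2 * q * fst v * snd p else - 2 * q * snd v * fst p)"
  unfolding line_const_def reflect_def by (auto simp: algebra_simps)

lemma line_const_bound:
  assumes "slope_state (real p / real q) s" "q > 0"
  shows "\<bar>line_const (real q) s\<bar> \<le> real p + real q"
proof -
  obtain x y v where s: "s = ((x, y), v)" by (metis prod.exhaust)
  obtain s1 s2 :: int where s12: "s1 = 1 \<or> s1 = -1" "s2 = 1 \<or> s2 = -1"
    "v = (of_int s1, of_int s2 * real p / real q)"
    using slope_state_velocity assms(1) unfolding s by blast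
  have "0 \<le> x" "x \<le> 1" "0 \<le> y" "y \<le> 1" using assms(1) unfolding s slope_state_def unit_square_iff by auto
  then have "0 \<le> real q * y" "real q * y \<le> real q" "0 \<le> real p * x" "real p * x \<le> real p"
    by (simp_all add: mult_left_le)
  moreover have "line_const (real q) s = of_int s1 * (real q * y) - of_int s2 * (real p * x)"
    unfolding s s12(3) line_const_def using assms(2) by (simp add: algebra_simps)
  ultimately show ?thesis using s12(1,2) by auto
qed

lemma line_const_grid_point:
  assumes "slope_state (real p / real q) (x, v)" "q > 0" "fst z \<in> grid a n" "snd z \<in> grid a n" "a > 0"
  shows "line_const (real q) (z, v) * real a ^ n \<in> \<int>"
proof -
  obtain s1 s2 :: int where s: "v = (of_int s1, of_int s2 * real p / real q)"
    using slope_state_velocity assms(1) by blast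
  obtain J1 J2 :: int where J: "fst z = of_int J1 / real a ^ n" "snd z = of_int J2 / real a ^ n"
    using assms(3,4) unfolding grid_def by blast
  have "line_const (real q) (z, v) * real a ^ n = of_int (s1 * int q * J2 - s2 * int p * J1)"
    using assms(2,5) by (simp add: line_const_def s J field_simps)
  then show ?thesis by simp
qed

definition pm_coset :: "real \<Rightarrow> real \<Rightarrow> real \<Rightarrow> bool" where
  "pm_coset c d z \<longleftrightarrow> (\<exists>w\<in>\<int>. z = c + 2 * w / d \<or> z = - c + 2 * w / d)"

lemma pm_coset_uminus:
  assumes "pm_coset c d z"
  shows "pm_coset c d (- z)"
proof -
  obtain w where "w \<in> \<int>" "z = c + 2 * w / d \<or> z = - c + 2 * w / d"
    using assms unfolding pm_coset_def by blast
  then have "- w \<in> \<int>" "- z = - c + 2 * (- w) / d \<or> - z = c + 2 * (- w) / d" by auto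
  then show ?thesis unfolding pm_coset_def by blast
qed

lemma pm_coset_add:
  assumes "pm_coset c d z" "m \<in> \<int>"
  shows "pm_coset c d (z + 2 * m / d)"
proof -
  obtain w where "w \<in> \<int>" "z = c + 2 * w / d \<or> z = - c + 2 * w / d"
    using assms(1) unfolding pm_coset_def by blast
  moreover have "2 * w / d + 2 * m / d = 2 * (w + m) / d" by (simp add: add_divide_distrib distrib_left)
  ultimately have "w + m \<in> \<int>" "z + 2 * m / d = c + 2 * (w + m) / d \<or> z + 2 * m / d = - c + 2 * (w + m) / d"
    using assms(2) by auto
  then show ?thesis unfolding pm_coset_def by blast
qed

lemma pm_coset_times_Ints:
  assumes "pm_coset c d z" "z * d \<in> \<int>" "d \<noteq> 0"
  shows "c * d \<in> \<int>"
proof -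
  obtain w where w: "w \<in> \<int>" "z = c + 2 * w / d \<or> z = - c + 2 * w / d"
    using assms(1) unfolding pm_coset_def by blast
  have "z * d = c * d + 2 * w \<or> z * d = - (c * d) + 2 * w"
    using w(2) assms(3) by (elim disjE) (simp_all add: field_simps)
  then have "c * d = z * d - 2 * w \<or> c * d = - (z * d - 2 * w)" by auto
  then show ?thesis using assms(2) w(1) by auto
qed

lemma finite_pm_coset:
  assumes "d > 0"
  shows "finite {z. pm_coset c d z \<and> \<bar>z\<bar> \<le> B}"
proof -
  define M where "M = \<lceil>(B + \<bar>c\<bar>) * d\<rceil>"
  have "{z. pm_coset c d z \<and> \<bar>z\<bar> \<le> B} \<subseteq> (\<lambda>(e, k). e + 2 * of_int k / d) ` ({c, - c} \<times> {-M..M})"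
  proof
    fix z assume "z \<in> {z. pm_coset c d z \<and> \<bar>z\<bar> \<le> B}"
    then obtain w e where w: "w \<in> \<int>" "e \<in> {c, - c}" "z = e + 2 * w / d" and "\<bar>z\<bar> \<le> B"
      unfolding pm_coset_def by blast
    then obtain k where k: "w = of_int k" by (metis Ints_cases)
    have "\<bar>e\<bar> = \<bar>c\<bar>" using w(2) by auto
    then have "\<bar>2 * w / d\<bar> \<le> B + \<bar>c\<bar>" using w(3) \<open>\<bar>z\<bar> \<le> B\<close> by linarith
    then have "2 * \<bar>w\<bar> \<le> (B + \<bar>c\<bar>) * d"
      using assms by (simp add: abs_divide abs_mult pos_divide_le_eq)
    then have "of_int \<bar>k\<bar> \<le> (B + \<bar>c\<bar>) * d" unfolding k by simp
    then have "\<bar>k\<bar> \<le> M" unfolding M_def by (simp add: le_ceiling_iff)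
    then show "z \<in> (\<lambda>(e, k). e + 2 * of_int k / d) ` ({c, - c} \<times> {-M..M})"
      using w k by (intro image_eqI[where x = "(e, k)"]) auto
  qed
  moreover have "finite ((\<lambda>(e, k). e + 2 * of_int k / d) ` ({c, - c} \<times> {-M..M}))"
    by (intro finite_imageI finite_SigmaI) auto
  ultimately show ?thesis by (rule finite_subset)
qed

lemma pm_coset_reflect:
  assumes "slope_state (real p / real q) (x, v)" "q > 0" "a > 0" "z \<in> bdry a n"
    "pm_coset c (real a ^ n) (line_const (real q) (z, v))"
  shows "pm_coset c (real a ^ n) (line_const (real q) (z, reflect a n z v))"
proof -
  obtain s1 s2 :: int where s: "v = (of_int s1, of_int s2 * real p / real q)"
    using slope_state_velocity assms(1) by blast
  note K = pm_coset_uminus[OF assms(5)]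
  consider "z \<in> Qcorners" | "z \<notin> Qcorners" "z \<in> hbd a n" | "z \<notin> Qcorners" "z \<notin> hbd a n" "z \<in> vbd a n"
    using assms(4) unfolding bdry_def by blast
  then show ?thesis
  proof cases
    case 1
    then show ?thesis using K line_const_reflect[of q z a n v] by simp
  next
    case 2
    obtain J where J: "snd z = of_int J / real a ^ n"
      using hbd_snd_in_hlines[OF 2(2)] hlines_subset_grid[OF assms(3)] unfolding grid_def by blast
    have "2 * real q * fst v * snd z = 2 * of_int (int q * s1 * J) / real a ^ n"
      unfolding s J by simp
    then show ?thesis using 2 pm_coset_add[OF K, of "of_int (int q * s1 * J)"] line_const_reflect[of q z a n v]
      by simp
  next
    case 3
    obtain J where J: "fst z = of_int J / real a ^ n"
      using vbd_fst_in_vlines[OF 3(3)] vlines_subset_grid[OF assms(3)] unfolding grid_def by blast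
    have "- 2 * real q * snd v * fst z = 2 * of_int (- s2 * int p * J) / real a ^ n"
      unfolding s J using assms(2) by simp
    then show ?thesis using 3 pm_coset_add[OF K, of "of_int (- s2 * int p * J)"] line_const_reflect[of q z a n v]
      by simp
  qed
qed

lemma pm_coset_avoids_pcorners:
  assumes "slope_state (real p / real q) (x, v)" "q > 0" "a > 0"
    "pm_coset c (real a ^ n) (line_const (real q) (z, v))" "c * real a ^ n \<notin> \<int>"
  shows "z \<notin> pcorners a n"
proof
  assume "z \<in> pcorners a n"
  then have "fst z \<in> grid a n" "snd z \<in> grid a n"
    using corner_in_hbd_vbd[of z a n] hbd_snd_in_hlines vbd_fst_in_vlines
      hlines_subset_grid[OF assms(3)] vlines_subset_grid[OF assms(3)] by blast+
  then have "line_const (real q) (z, v) * real a ^ n \<in> \<int>"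
    using line_const_grid_point[OF assms(1,2) _ _ assms(3)] by blast
  then show False using pm_coset_times_Ints[OF assms(4)] assms(3,5) by simp
qed

definition orbit_inv :: "nat \<Rightarrow> nat \<Rightarrow> nat \<Rightarrow> nat \<Rightarrow> real \<Rightarrow> state \<Rightarrow> bool" where
  "orbit_inv a n p q c s \<longleftrightarrow> slope_state (real p / real q) s
     \<and> pm_coset c (real a ^ n) (line_const (real q) s) \<and> collision_state a n s"

lemma orbit_inv_bstep:
  assumes "odd a" "a \<ge> 3" "q > 0" "pcorners a n = {} \<or> c * real a ^ n \<notin> \<int>"
    "orbit_inv a n p q c (x, v)"
  shows "\<exists>s'. bstep a n (x, v) = Some s' \<and> orbit_inv a n p q c s'"
proof -
  have S: "slope_state (real p / real q) (x, v)"
    and K: "pm_coset c (real a ^ n) (line_const (real q) (x, v))"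
    using assms(5) unfolding orbit_inv_def by auto
  have "v \<noteq> (0,0)" using S unfolding slope_state_def by auto
  moreover have "a \<ge> 1" using assms(2) by simp
  moreover obtain T0 where "hit a n x v T0" using slope_state_exit[OF S] by blast
  ultimately obtain T where hT: "hit a n x v T" and first: "\<And>t. hit a n x v t \<Longrightarrow> T \<le> t"
    using first_hit by blast
  define z where "z = ray x v T"
  have Kz: "pm_coset c (real a ^ n) (line_const (real q) (z, v))"
    using K unfolding z_def line_const_ray .
  have a0: "a > 0" using assms(2) by simp
  have no_corner: "z \<notin> pcorners a n"
    using assms(4) pm_coset_avoids_pcorners[OF S assms(3) a0 Kz] by auto
  have "z \<in> bdry a n"
    using hT corner_in_hbd_vbd unfolding hit_def bdry_def z_def by blast
  then have "pm_coset c (real a ^ n) (line_const (real q) (z, reflect a n z v))"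
    using pm_coset_reflect[OF S assms(3) a0 _ Kz] by blast
  moreover have "slope_state (real p / real q) (z, reflect a n z v)"
    using slope_state_reflect[OF assms(1,2) S hT first] unfolding z_def .
  moreover have "collision_state a n (z, reflect a n z v)"
    using hT no_corner reflect_abs[of a n z v] unfolding collision_state_def hit_def z_def by auto
  moreover have "bstep a n (x, v) = Some (z, reflect a n z v)"
    using bstep_first_hit[OF hT first] no_corner unfolding z_def by simp
  ultimately show ?thesis unfolding orbit_inv_def by auto
qed

lemma finite_orbit_inv:
  assumes "a \<ge> 1" "q > 0"
  shows "finite {s. orbit_inv a n p q c s}"
proof -
  \<comment> \<open>a state is determined by its velocity, its line constant and one coordinate lying on a wall\<close>
  define \<alpha> where "\<alpha> = real p / real q"
  define Ks where "Ks = {K. pm_coset c (real a ^ n) K \<and> \<bar>K\<bar> \<le> real p + real q}"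
  define V where "V = {1, -1 :: real} \<times> {\<alpha>, - \<alpha>}"
  define on_hlines where
    "on_hlines = (\<lambda>(y, K, v1, v2). ((v1 * y - K / real q) / v2, y)) ` (hlines a n \<times> Ks \<times> V)"
  define on_vlines where
    "on_vlines = (\<lambda>(x, K, v1, v2). (x, v1 * (K / real q + v2 * x))) ` (vlines a n \<times> Ks \<times> V)"
  have "finite Ks" unfolding Ks_def using assms(1) by (intro finite_pm_coset) simp
  then have "finite ((Qcorners \<union> on_hlines \<union> on_vlines) \<times> V)"
    unfolding on_hlines_def on_vlines_def V_def Qcorners_def sqcorners_def
    using finite_hlines[OF assms(1)] finite_vlines[OF assms(1)] by auto
  moreover have "{s. orbit_inv a n p q c s} \<subseteq> (Qcorners \<union> on_hlines \<union> on_vlines) \<times> V"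
  proof
    fix s assume "s \<in> {s. orbit_inv a n p q c s}"
    then have inv: "orbit_inv a n p q c s" by simp
    obtain x y v1 v2 where s: "s = ((x, y), (v1, v2))" by (metis prod.exhaust)
    obtain s1 s2 :: int where s12: "s1 = 1 \<or> s1 = -1" "s2 = 1 \<or> s2 = -1"
      "(v1, v2) = (of_int s1, of_int s2 * real p / real q)"
      using slope_state_velocity inv unfolding s orbit_inv_def by blast
    then have v: "(v1, v2) \<in> V" "v1 * v1 = 1" unfolding V_def \<alpha>_def by auto
    define K where "K = line_const (real q) s"
    have "K \<in> Ks" using inv line_const_bound[OF _ assms(2)] unfolding K_def Ks_def orbit_inv_def by auto
    have K_q: "K / real q = v1 * y - v2 * x" unfolding K_def s line_const_def using assms(2) by simp
    consider "(x, y) \<in> Qcorners" | "(x, y) \<in> hbd a n" "v2 \<noteq> 0" | "(x, y) \<in> vbd a n" "v1 \<noteq> 0"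
      using inv unfolding orbit_inv_def collision_state_def s by auto
    then have "(x, y) \<in> Qcorners \<union> on_hlines \<union> on_vlines"
    proof cases
      case 2
      then have "x = (v1 * y - K / real q) / v2" using K_q by (simp add: field_simps)
      then have "(x, y) \<in> on_hlines" unfolding on_hlines_def
        using hbd_snd_in_hlines[OF 2(1)] \<open>K \<in> Ks\<close> v(1) by (intro image_eqI[where x = "(y, K, v1, v2)"]) auto
      then show ?thesis by blast
    next
      case 3
      have "y = v1 * (K / real q + v2 * x)" using K_q v(2) by (simp add: algebra_simps)
      then have "(x, y) \<in> on_vlines" unfolding on_vlines_def
        using vbd_fst_in_vlines[OF 3(1)] \<open>K \<in> Ks\<close> v(1) by (intro image_eqI[where x = "(x, K, v1, v2)"]) auto
      then show ?thesis by blast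
    qed blast
    then show "s \<in> (Qcorners \<union> on_hlines \<union> on_vlines) \<times> V" using v(1) s by auto
  qed
  ultimately show ?thesis by (rule finite_subset[rotated])
qed

lemma periodic_of_orbit_inv:
  assumes "odd a" "a \<ge> 3" "q > 0" "pcorners a n = {} \<or> c * real a ^ n \<notin> \<int>" "orbit_inv a n p q c s0"
  shows "periodic a n s0"
proof (rule periodic_of_invariant[where P = "orbit_inv a n p q c"])
  show "finite {s. orbit_inv a n p q c s}" using finite_orbit_inv assms(2,3) by simp
  fix s assume inv: "orbit_inv a n p q c s"
  then show "\<exists>s'. bstep a n s = Some s' \<and> orbit_inv a n p q c s'"
    using orbit_inv_bstep[OF assms(1-4)] by (metis prod.exhaust)
  show "collision_state a n s \<and> snd s \<noteq> (0,0)"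
    using inv unfolding orbit_inv_def slope_state_def by auto
qed (use assms in auto)

section \<open>Peripheral squares missed by the orbit\<close>

text \<open>In units of the side of the removed square, the form \<open>2(s\<^sub>1qY - s\<^sub>2pX)\<close> takes the value
  \<open>a(s\<^sub>1q(2j+1) - s\<^sub>2p(2i+1))\<close> at the centre, an odd multiple of \<open>a\<close> when \<open>G + p + q\<close> is odd,
  and varies by at most \<open>p + q < a\<close> over the square.\<close>
lemma odd_line_misses_middle_cell:
  fixes i j p q :: nat and G s1 s2 :: int and X Y :: real
  assumes "odd a" "a \<ge> 3" "p + q < a" "s1 = 1 \<or> s1 = -1" "s2 = 1 \<or> s2 = -1"
    "real (a * i + mid a) \<le> X" "X \<le> real (a * i + mid a) + 1"
    "real (a * j + mid a) \<le> Y" "Y \<le> real (a * j + mid a) + 1"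
    "2 * (of_int s1 * real q * Y - of_int s2 * real p * X) = real a * of_int G" "odd (G + int p + int q)"
  shows False
proof -
  define dX where "dX = 2 * X - real a * (2 * i + 1)"
  define dY where "dY = 2 * Y - real a * (2 * j + 1)"
  define H where "H = s1 * int q * (2 * j + 1) - s2 * int p * (2 * i + 1)"
  define R where "R = of_int s1 * real q * dY - of_int s2 * real p * dX"
  have "2 * real (mid a) + 1 = real a"
    using mid_odd[OF assms(1,2)] by (metis of_nat_1 of_nat_add of_nat_mult of_nat_numeral)
  then have d: "\<bar>dX\<bar> \<le> 1" "\<bar>dY\<bar> \<le> 1"
    using assms(6-9) unfolding dX_def dY_def by (auto simp: algebra_simps)
  have "\<bar>R\<bar> \<le> \<bar>of_int s1 * real q * dY\<bar> + \<bar>of_int s2 * real p * dX\<bar>"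
    unfolding R_def by (rule abs_triangle_ineq4)
  also have "\<dots> = real q * \<bar>dY\<bar> + real p * \<bar>dX\<bar>" using assms(4,5) by (auto simp: abs_mult)
  also have "\<dots> \<le> real q + real p" using d by (intro add_mono mult_left_le) auto
  finally have "\<bar>R\<bar> < real a" using assms(3) by linarith
  have "H + int p + int q = (s1 * (2 * j + 1) + 1) * int q - (s2 * (2 * i + 1) - 1) * int p"
    unfolding H_def by (simp add: algebra_simps)
  moreover have "even (s1 * (2 * j + 1) + 1)" "even (s2 * (2 * i + 1) - 1)" using assms(4,5) by auto
  ultimately have "even (H + int p + int q)" by simp
  then have "G \<noteq> H" using assms(11) by auto
  then have "\<bar>real_of_int (G - H)\<bar> \<ge> 1" by linarith
  then have "real a \<le> \<bar>real a * of_int (G - H)\<bar>"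
    using mult_left_mono[of 1 "\<bar>real_of_int (G - H)\<bar>" "real a"] by (simp add: abs_mult)
  moreover have "real a * of_int (G - H) = R"
    using assms(10) unfolding R_def H_def dX_def dY_def by (simp add: algebra_simps)
  ultimately show False using \<open>\<bar>R\<bar> < real a\<close> by linarith
qed

lemma pm_coset_scaled:
  fixes h :: int
  assumes "odd a" "pm_coset c (real a ^ m) K" "2 * c * real a ^ m = of_int h" "m < k"
  obtains G :: int where "2 * real a ^ k * K = real a * of_int G" "even (G - h)"
proof -
  obtain w where "w \<in> \<int>" "K = c + 2 * w / real a ^ m \<or> K = - c + 2 * w / real a ^ m"
    using assms(2) unfolding pm_coset_def by blast
  then obtain W \<sigma> :: int where \<sigma>: "\<sigma> = 1 \<or> \<sigma> = -1" and K: "K = of_int \<sigma> * c + 2 * of_int W / real a ^ m"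
    by (metis Ints_cases mult_1 mult_minus_left of_int_1 of_int_minus)
  obtain l where l: "k = Suc (l + m)" using assms(4) by (metis add.commute less_iff_Suc_add)
  have "real a ^ m > 0" using assms(1) by (simp add: odd_pos)
  then have "2 * real a ^ k * K = real a * real a ^ l * (of_int \<sigma> * (2 * c * real a ^ m) + 4 * of_int W)"
    unfolding K l by (simp add: power_add field_simps)
  then have scaled: "2 * real a ^ k * K = real a * of_int ((\<sigma> * h + 4 * W) * int a ^ l)"
    unfolding assms(3) by simp
  have "odd (\<sigma> * int a ^ l)" using \<sigma> assms(1) by auto
  then have "even (h * (\<sigma> * int a ^ l - 1) + 4 * W * int a ^ l)" by simp
  moreover have "(\<sigma> * h + 4 * W) * int a ^ l - h = h * (\<sigma> * int a ^ l - 1) + 4 * W * int a ^ l"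
    by (simp add: algebra_simps)
  ultimately show thesis using that[OF scaled] by simp
qed

lemma line_misses_psquare:
  fixes h :: int
  assumes "odd a" "a \<ge> 3" "p + q < a" "q > 0" "slope_state (real p / real q) (x, v)"
    "pm_coset c (real a ^ m) (line_const (real q) (x, v))"
    "2 * c * real a ^ m = of_int h" "odd (h + int p + int q)" "m < k"
  shows "ray x v t \<notin> csq (fst (psquare a k i j)) (snd (psquare a k i j))"
proof
  assume z: "ray x v t \<in> csq (fst (psquare a k i j)) (snd (psquare a k i j))"
  obtain s1 s2 :: int where s: "s1 = 1 \<or> s1 = -1" "s2 = 1 \<or> s2 = -1"
    "v = (of_int s1, of_int s2 * real p / real q)"
    using slope_state_velocity assms(5) by blast
  obtain G where scaled: "2 * real a ^ k * line_const (real q) (x, v) = real a * of_int G"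
    and "even (G - h)"
    using pm_coset_scaled[OF assms(1,6,7,9)] by blast
  moreover have "G + int p + int q = (h + int p + int q) + (G - h)" by simp
  ultimately have G_odd: "odd (G + int p + int q)" using assms(8) by simp
  obtain zx zy where zxy: "ray x v t = (zx, zy)" by fastforce
  define X where "X = real a ^ k * zx"
  define Y where "Y = real a ^ k * zy"
  have ak: "real a ^ k > 0" using assms(2) by simp
  have bounds: "real (a * i + mid a) \<le> X" "X \<le> real (a * i + mid a) + 1"
    "real (a * j + mid a) \<le> Y" "Y \<le> real (a * j + mid a) + 1"
    using z ak unfolding zxy X_def Y_def psquare_def csq_def by (auto simp: field_simps)
  have "line_const (real q) (x, v) = line_const (real q) ((zx, zy), v)"
    using line_const_ray[of q x v t] zxy by simp
  also have "\<dots> = of_int s1 * real q * zy - of_int s2 * real p * zx"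
    using assms(4) by (simp add: line_const_def s(3) field_simps)
  finally have Kz: "line_const (real q) (x, v) = of_int s1 * real q * zy - of_int s2 * real p * zx" .
  have "2 * (of_int s1 * real q * Y - of_int s2 * real p * X)
      = 2 * real a ^ k * (of_int s1 * real q * zy - of_int s2 * real p * zx)"
    unfolding X_def Y_def by (simp add: algebra_simps)
  also have "\<dots> = real a * of_int G" using scaled unfolding Kz .
  finally have "2 * (of_int s1 * real q * Y - of_int s2 * real p * X) = real a * of_int G" .
  then show False
    using odd_line_misses_middle_cell[OF assms(1-3) s(1,2) bounds] G_odd by blast
qed

section \<open>Independence of the level\<close>

lemma boundary_eq_if_avoids:
  assumes "m \<le> n"
    "\<And>k i j. m < k \<Longrightarrow> k \<le> n \<Longrightarrow> (i, j) \<in> cells a (k - 1)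
      \<Longrightarrow> z \<notin> csq (fst (psquare a k i j)) (snd (psquare a k i j))"
  shows "(z \<in> hbd a n \<longleftrightarrow> z \<in> hbd a m) \<and> (z \<in> vbd a n \<longleftrightarrow> z \<in> vbd a m)
    \<and> (z \<in> pcorners a n \<longleftrightarrow> z \<in> pcorners a m)"
proof -
  have sub: "psq a m \<subseteq> psq a n" using psq_mono[OF assms(1)] .
  have out: "z \<notin> csq (fst x) (snd x)" if x: "x \<in> psq a n" "x \<notin> psq a m" for x
  proof -
    obtain k i j where "m < k" "k \<le> n" "(i, j) \<in> cells a (k - 1)" "x = psquare a k i j"
      using psq_new_levels[OF x] by blast
    then show ?thesis using assms(2) by blast
  qed
  have "z \<in> hbd a n \<longleftrightarrow> z \<in> hbd a m"
    unfolding hbd_iff using sub out edges_subset_csq(1) by blast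
  moreover have "z \<in> vbd a n \<longleftrightarrow> z \<in> vbd a m"
    unfolding vbd_iff using sub out edges_subset_csq(2) by blast
  moreover have "z \<in> pcorners a n \<longleftrightarrow> z \<in> pcorners a m"
    unfolding pcorners_iff using sub out edges_subset_csq(3)[OF psq_side_nonneg] by blast
  ultimately show ?thesis by blast
qed

lemma bstep_eq_if_avoids:
  assumes "m \<le> n"
    "\<And>t k i j. m < k \<Longrightarrow> k \<le> n \<Longrightarrow> (i, j) \<in> cells a (k - 1)
      \<Longrightarrow> ray x v t \<notin> csq (fst (psquare a k i j)) (snd (psquare a k i j))"
  shows "bstep a n (x, v) = bstep a m (x, v)"
proof -
  have same: "(ray x v t \<in> hbd a n \<longleftrightarrow> ray x v t \<in> hbd a m) \<and> (ray x v t \<in> vbd a n \<longleftrightarrow> ray x v t \<in> vbd a m)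
      \<and> (ray x v t \<in> pcorners a n \<longleftrightarrow> ray x v t \<in> pcorners a m)" for t
    using boundary_eq_if_avoids[OF assms(1)] assms(2) by blast
  then have "hit a n x v = hit a m x v" by (intro ext) (simp add: hit_def)
  then show ?thesis unfolding bstep_def Let_def fst_conv snd_conv using same by simp
qed

lemma orbit_eq_of_invariant:
  assumes "\<And>s. P s \<Longrightarrow> bstep a n s = bstep a m s" "\<And>s. P s \<Longrightarrow> \<exists>s'. bstep a m s = Some s' \<and> P s'" "P s0"
  shows "orbit a n s0 k = orbit a m s0 k"
proof -
  have "\<exists>s. orbit a m s0 k = Some s \<and> P s \<and> orbit a n s0 k = orbit a m s0 k"
  proof (induction k)
    case (Suc k)
    then obtain s where s: "orbit a m s0 k = Some s" "P s" "orbit a n s0 k = orbit a m s0 k" by blast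
    then obtain s' where "bstep a m s = Some s'" "P s'" using assms(2) by blast
    then show ?case using s assms(1)[OF s(2)] by simp
  qed (use assms(3) in simp)
  then show ?thesis by blast
qed

lemma orbit_inv_orbit_eq:
  fixes h :: int
  assumes "odd a" "a \<ge> 3" "p + q < a" "q > 0" "pcorners a m = {} \<or> c * real a ^ m \<notin> \<int>"
    "2 * c * real a ^ m = of_int h" "odd (h + int p + int q)" "m \<le> n" "orbit_inv a m p q c s0"
  shows "orbit a n s0 k = orbit a m s0 k"
proof (rule orbit_eq_of_invariant[where P = "orbit_inv a m p q c"])
  fix s assume inv: "orbit_inv a m p q c s"
  obtain x v where s: "s = (x, v)" by (metis prod.exhaust)
  have "slope_state (real p / real q) (x, v)" "pm_coset c (real a ^ m) (line_const (real q) (x, v))"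
    using inv unfolding s orbit_inv_def by auto
  then show "bstep a n s = bstep a m s"
    unfolding s using line_misses_psquare[OF assms(1-4) _ _ assms(6,7)] by (intro bstep_eq_if_avoids[OF assms(8)])
  show "\<exists>s'. bstep a m s = Some s' \<and> orbit_inv a m p q c s'"
    using orbit_inv_bstep[OF assms(1,2,4,5)] inv unfolding s .
qed (rule assms(9))

lemma orbit_eq_imp_periodic_path_eq:
  assumes "\<And>k. orbit a n s k = orbit a m s k"
  shows "(periodic a n s \<longleftrightarrow> periodic a m s) \<and> orbit_path a n s = orbit_path a m s"
proof -
  have "orbit a n s = orbit a m s" using assms by (rule ext)
  then show ?thesis unfolding periodic_def singular_def orbit_path_def by simp
qed

lemma compatible_refl: "compatible a n s s"
proof -
  have "fst s = ray (fst s) (snd s) 0" unfolding ray_def by simp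
  moreover have "seg (fst s) (fst s) = {fst s}" unfolding seg_def by auto
  ultimately show ?thesis unfolding compatible_def by auto
qed

lemma eventually_constant_periodic_orbits:
  assumes "\<And>n. periodic a n s" "\<And>n k. N \<le> n \<Longrightarrow> orbit a n s k = orbit a N s k"
  shows "(\<forall>m n. m < n \<longrightarrow> compatible a n s s) \<and> (\<forall>n. periodic a n s)
     \<and> (\<exists>N. (\<forall>n\<ge>N. orbit_path a (Suc n) s = orbit_path a n s) \<and> periodic_orbit_Sa a (orbit_path a N s))"
proof -
  have path: "orbit_path a n s = orbit_path a N s" if "N \<le> n" for n
    using orbit_eq_imp_periodic_path_eq[OF assms(2)[OF that]] by blast
  have const: "\<forall>n\<ge>N. orbit_path a (Suc n) s = orbit_path a n s"
    using path[of "Suc _"] path by (metis le_SucI)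
  have "periodic_orbit_Sa a (orbit_path a N s)"
    unfolding periodic_orbit_Sa_def
    by (rule exI[of _ N], rule exI[of _ "\<lambda>_. s"]) (use assms(1) compatible_refl const in auto)
  then show ?thesis using assms(1) compatible_refl const by blast
qed

lemma bottom_start_orbit_inv:
  assumes "odd a" "a \<ge> 3" "q > 0" "0 \<le> x0" "x0 < 1" "x0 = 0 \<or> p > 0"
    "pm_coset c (real a ^ n) (- real p * x0)"
  shows "orbit_inv a n p q c ((x0, 0), (1, real p / real q))"
proof -
  have "slope_state (real p / real q) ((x0, 0), (1, real p / real q))"
    using assms(4,5) unfolding slope_state_def unit_square_iff by auto
  moreover have "line_const (real q) ((x0, 0), (1, real p / real q)) = - real p * x0"
    unfolding line_const_def using assms(3) by simp
  moreover have "(x0, 0) \<notin> pcorners a n" using pcorners_in_open_unit_square[OF assms(1,2)] by fastforce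
  moreover have "(x0, 0) \<in> Qcorners \<or> ((x0, 0) \<in> hbd a n \<and> real p / real q \<noteq> 0)"
    using assms(3-6) hbd_bottom_top[of x0 0 a n] unfolding Qcorners_def sqcorners_def by auto
  ultimately show ?thesis using assms(7) unfolding orbit_inv_def collision_state_def by auto
qed

lemma corner_start_orbits:
  assumes "odd a" "a \<ge> 3" "p + q < a" "q > 0" "odd (p + q)"
  defines "s0 \<equiv> ((0, 0), (1, real p / real q))"
  shows "periodic a n s0" "orbit a n s0 k = orbit a 0 s0 k"
proof -
  have "pm_coset 0 (real a ^ 0) (- real p * 0)" unfolding pm_coset_def by force
  then have inv: "orbit_inv a 0 p q 0 s0"
    unfolding s0_def using bottom_start_orbit_inv[OF assms(1,2,4)] by simp
  show orbit: "orbit a n s0 k = orbit a 0 s0 k" for k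
    using orbit_inv_orbit_eq[OF assms(1-4) _ _ _ _ inv, of 0] pcorners_0 assms(5) by simp
  have "periodic a 0 s0" using periodic_of_orbit_inv[OF assms(1,2,4) _ inv] pcorners_0 by simp
  then show "periodic a n s0" using orbit_eq_imp_periodic_path_eq[OF orbit] by blast
qed

lemma odd_fraction_not_Ints:
  assumes "odd p" "odd r" "odd a"
  shows "real p * real r / (2 * real a ^ n0) * real a ^ n \<notin> \<int>"
proof
  assume "real p * real r / (2 * real a ^ n0) * real a ^ n \<in> \<int>"
  then obtain J where J: "real p * real r / (2 * real a ^ n0) * real a ^ n = of_int J"
    by (elim Ints_cases)
  have "a > 0" using assms(3) by (simp add: odd_pos)
  then have "real (p * r * a ^ n) = of_int (2 * J * int a ^ n0)" using J by (simp add: field_simps)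
  then have "int (p * r * a ^ n) = 2 * J * int a ^ n0" by linarith
  then have "even (p * r * a ^ n)" by (metis dvd_triv_left even_of_nat mult.assoc)
  then show False using assms by simp
qed

lemma bottom_start_orbits:
  assumes "odd a" "a \<ge> 3" "p + q < a" "odd p" "odd q" "odd r" "r < 2 * a ^ n0"
  defines "s0 \<equiv> ((real r / (2 * real a ^ n0), 0), (1, real p / real q))"
  shows "periodic a n s0" "n0 \<le> n \<Longrightarrow> orbit a n s0 k = orbit a n0 s0 k"
proof -
  define c where "c = real p * real r / (2 * real a ^ n0)"
  have q: "q > 0" using assms(5) by (simp add: odd_pos)
  have "r > 0" using assms(6) by (simp add: odd_pos)
  moreover have "real r < 2 * real a ^ n0" using assms(7) by (metis of_nat_less_iff of_nat_mult of_nat_numeral of_nat_power)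
  ultimately have x0: "0 < real r / (2 * real a ^ n0)" "real r / (2 * real a ^ n0) < 1"
    using assms(2) by auto
  have "pm_coset c (real a ^ m) (- real p * (real r / (2 * real a ^ n0)))" for m
    unfolding pm_coset_def c_def by (intro bexI[of _ 0]) auto
  then have inv: "orbit_inv a m p q c s0" for m
    unfolding s0_def using bottom_start_orbit_inv[OF assms(1,2) q] x0 assms(4) by (simp add: odd_pos)
  have corner_free: "c * real a ^ m \<notin> \<int>" for m
    unfolding c_def using odd_fraction_not_Ints[OF assms(4,6,1)] .
  show "periodic a n s0" using periodic_of_orbit_inv[OF assms(1,2) q _ inv] corner_free by blast
  have "2 * c * real a ^ n0 = of_int (int (p * r))" unfolding c_def using assms(2) by simp
  moreover have "odd (int (p * r) + int p + int q)" using assms(4-6) by simp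
  ultimately show "orbit a n s0 k = orbit a n0 s0 k" if "n0 \<le> n"
    using orbit_inv_orbit_eq[OF assms(1-3) q _ _ _ that inv] corner_free by blast
qed

lemma A_set_slope:
  assumes "a \<ge> 3" "\<alpha> \<in> A_set (a - 2)"
  obtains p q where "\<alpha> = real p / real q" "p + q < a" "q > 0" "odd (p + q)"
proof (cases "a - 2 = 1")
  case True
  then show ?thesis using assms(2) that[of 0 1] by (simp add: A_set_def)
next
  case False
  then obtain p q where "\<alpha> = real p / real q" "p + q \<le> a - 2" "p < q" "odd (p + q)"
    using assms(2) unfolding A_set_def by auto
  then show ?thesis using that[of p q] by auto
qed

lemma B_set_slope:
  assumes "a \<ge> 3" "\<alpha> \<in> B_set a"
  obtains p q where "\<alpha> = real p / real q" "p + q < a" "odd p" "odd q"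
  using assms that unfolding B_set_def by fastforce

theorem theorem4p2:
  fixes a :: nat and \<alpha> :: real
  assumes "odd a" and "a \<ge> 3" and "\<alpha> \<in> A_set a \<union> B_set a"
  shows "(\<alpha> \<in> A_set (a - 2) \<longrightarrow>
            (let s = ((0, 0), (1, \<alpha>)) in
              (\<forall>m n. m < n \<longrightarrow> compatible a n s s)
              \<and> (\<forall>n. periodic a n s)
              \<and> (\<exists>N. (\<forall>n\<ge>N. orbit_path a (Suc n) s = orbit_path a n s)
                     \<and> periodic_orbit_Sa a (orbit_path a N s))))
       \<and> (\<alpha> \<in> B_set a \<longrightarrow>
            (\<forall>(n0::nat) (r::nat). 1 \<le> n0 \<and> odd r \<and> 0 < r \<and> r < 2 * a ^ n0 \<longrightarrow>
              (let s = ((real r / (2 * real a ^ n0), 0), (1, \<alpha>)) in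
                (\<forall>m n. m < n \<longrightarrow> compatible a n s s)
                \<and> (\<forall>n. periodic a n s)
                \<and> (\<exists>N. (\<forall>n\<ge>N. orbit_path a (Suc n) s = orbit_path a n s)
                       \<and> periodic_orbit_Sa a (orbit_path a N s)))))"
proof (intro conjI impI allI)
  assume "\<alpha> \<in> A_set (a - 2)"
  then obtain p q where pq: "\<alpha> = real p / real q" "p + q < a" "q > 0" "odd (p + q)"
    using A_set_slope[OF assms(2)] by blast
  note orbits = corner_start_orbits[OF assms(1,2) pq(2-4)]
  have "orbit a n ((0, 0), 1, \<alpha>) k = orbit a 0 ((0, 0), 1, \<alpha>) k" if "0 \<le> n" for n k
    using orbits(2) unfolding pq(1) .
  with orbits(1) show "let s = ((0, 0), (1, \<alpha>)) in
      (\<forall>m n. m < n \<longrightarrow> compatible a n s s) \<and> (\<forall>n. periodic a n s)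
      \<and> (\<exists>N. (\<forall>n\<ge>N. orbit_path a (Suc n) s = orbit_path a n s) \<and> periodic_orbit_Sa a (orbit_path a N s))"
    unfolding Let_def pq(1) by (rule eventually_constant_periodic_orbits)
next
  fix n0 r :: nat
  assume "\<alpha> \<in> B_set a" and r: "1 \<le> n0 \<and> odd r \<and> 0 < r \<and> r < 2 * a ^ n0"
  then obtain p q where pq: "\<alpha> = real p / real q" "p + q < a" "odd p" "odd q"
    using B_set_slope[OF assms(2)] by blast
  note orbits = bottom_start_orbits[OF assms(1,2) pq(2-4), of r n0]
  show "let s = ((real r / (2 * real a ^ n0), 0), (1, \<alpha>)) in
      (\<forall>m n. m < n \<longrightarrow> compatible a n s s) \<and> (\<forall>n. periodic a n s)
      \<and> (\<exists>N. (\<forall>n\<ge>N. orbit_path a (Suc n) s = orbit_path a n s) \<and> periodic_orbit_Sa a (orbit_path a N s))"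
    unfolding Let_def pq(1) using orbits r by (intro eventually_constant_periodic_orbits) blast+
qed

end
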